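(* Let $k\ge 3$ be an integer, $B\ge 1$ real and $d$ a natural number. The number of pairs $(u,v)\in\mathbb{Z}^2$ with $|u|\leq B$, $|v|\leq B$ and $u^k\equiv v^k\pmod d$ is $O(B^{1+\varepsilon}+B^{2+\varepsilon}d^{\varepsilon-2/k})$ for every $\varepsilon>0$, the implicit constant depending only on $k$ and $\varepsilon$. *)

theory Defs
  imports Complex_Main "HOL-Number_Theory.Cong"
begin

end

theory Submission
  imports Defs "HOL-Number_Theory.Number_Theory"
begin

text \<open>
  If \<open>d > 2B\<^sup>k\<close> the congruence \<open>u\<^sup>k \<equiv> v\<^sup>k\<close> is an equation, so \<open>|u| = |v|\<close> and there are
  \<open>O(B)\<close> pairs. Otherwise write \<open>(u, v) = g (a, b)\<close> with \<open>a, b\<close> coprime: then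
  \<open>a\<^sup>k \<equiv> b\<^sup>k\<close> modulo \<open>e = d / gcd(d, g\<^sup>k)\<close> and \<open>b\<close> is a unit modulo \<open>e\<close>, so \<open>a\<close> lies in
  one of at most \<open>\<rho>(e)\<close> residue classes, \<open>\<rho>(e)\<close> bounding the number of \<open>k\<close>-th roots of a unit
  modulo \<open>e\<close>. Hensel-type lifting and the Chinese remainder theorem give
  \<open>\<rho>(e) \<le> (k\<^sup>3)\<^bsup>\<omega>(e)\<^esup> = O(d\<^sup>\<delta>)\<close>, so each \<open>g\<close> contributes \<open>O(d\<^sup>\<delta> (B/g) (B/(g e) + 1))\<close> pairs.
  Summing over \<open>g\<close> with \<open>\<Sum>\<^sub>g gcd(d, g\<^sup>k)/g\<^sup>2 \<le> 2 \<tau>(d) d\<^bsup>1-2/k\<^esup>\<close> and the divisor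
  bound \<open>\<tau>(d) = O(d\<^sup>\<delta>)\<close> yields the estimate.
\<close>

section \<open>Submultiplicative functions are \<open>O(n\<^sup>\<delta>)\<close>\<close>

lemma obtain_prime_power_coprime_factor:
  fixes n :: nat
  assumes "n > 1"
  obtains p a m where "prime p" "a > 0" "m > 0" "\<not> p dvd m" "n = p ^ a * m" "m < n"
proof -
  obtain p where p: "prime p" "p dvd n"
    using assms prime_factor_nat by (metis less_irrefl)
  define a where "a = multiplicity p n"
  define m where "m = n div p ^ a"
  have "\<not> p dvd m"
    unfolding m_def a_def by (rule multiplicity_decompose) (use assms p in auto)
  moreover have n_eq: "n = p ^ a * m"
    unfolding m_def a_def using multiplicity_dvd[of p n] by simp
  moreover have "a > 0"
    unfolding a_def using p assms by (simp add: prime_multiplicity_gt_zero_iff)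
  moreover have "m > 0"
    using n_eq assms by (metis gr0I mult_0_right not_one_less_zero)
  moreover have "p ^ a \<ge> 2"
    using \<open>a > 0\<close> prime_ge_2_nat[OF p(1)] power_increasing[of 1 a p] by simp
  ultimately show ?thesis
    using that p n_eq n_less_m_mult_n[of m "p ^ a"] by simp
qed

lemma prime_factors_prime_power_mult:
  fixes p a m :: nat
  assumes "prime p" "a > 0" "m > 0" "\<not> p dvd m"
  shows "prime_factors (p ^ a * m) = insert p (prime_factors m)"
proof -
  have "prime_factors (p ^ a) = {p}"
    using assms by (simp add: prime_factorization_prime_power)
  then show ?thesis
    using assms prime_factors_product[of "p ^ a" m] by (simp add: prime_gt_0_nat)
qed

lemma card_prime_factors_prime_power_mult:
  fixes p a m :: nat
  assumes "prime p" "a > 0" "m > 0" "\<not> p dvd m"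
  shows "card (prime_factors (p ^ a * m)) = Suc (card (prime_factors m))"
  using prime_factors_prime_power_mult[OF assms] assms(4)
  by (simp add: card_insert_if in_prime_factors_iff)

lemma linear_le_prime_power_powr:
  fixes c \<delta> :: real
  assumes "\<delta> > 0" "c \<ge> 1"
  obtains K where "K \<ge> 1" "\<And>(p::nat) (a::nat). prime p \<Longrightarrow> c * (real a + 1) \<le> K * real p powr (a * \<delta>)"
proof -
  define L where "L = \<delta> * ln 2"
  have "L > 0" unfolding L_def using assms by simp
  define K where "K = c * max 1 (1 / L)"
  have "K \<ge> 1"
    unfolding K_def using assms mult_mono[OF assms(2), of 1 "max 1 (1 / L)"] by simp
  moreover have "c * (real a + 1) \<le> K * real p powr (a * \<delta>)" if p: "prime p" for p a :: nat
  proof -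
    have "a + 1 \<le> max 1 (1 / L) * (1 + a * L)"
    proof (cases "L \<ge> 1")
      case True
      then have "real a \<le> a * L" by (simp add: mult_le_cancel_left1)
      then show ?thesis using True by (simp add: max_def)
    next
      case False
      then have "max 1 (1 / L) = 1 / L" "1 / L \<ge> 1"
        using \<open>L > 0\<close> by (auto simp: max_def le_divide_eq)
      then show ?thesis using \<open>L > 0\<close> by (simp add: field_simps)
    qed
    also have "1 + a * L \<le> exp (a * L)"
      using exp_ge_add_one_self by simp
    also have "exp (a * L) = 2 powr (a * \<delta>)"
      unfolding L_def powr_def by (simp add: ac_simps)
    also have "2 powr (a * \<delta>) \<le> real p powr (a * \<delta>)"
      using prime_ge_2_nat[OF p] assms by (intro powr_mono2) auto
    finally have "a + 1 \<le> max 1 (1 / L) * real p powr (a * \<delta>)"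
      by (simp add: mult_left_mono)
    then show ?thesis
      unfolding K_def using assms(2) by (simp add: mult.assoc mult_left_mono)
  qed
  ultimately show ?thesis by (rule that)
qed

lemma linear_le_large_prime_power_powr:
  fixes c \<delta> :: real and p a :: nat
  assumes "\<delta> > 0" "c \<ge> 1" "prime p" "real p \<ge> (2 * c) powr (1 / \<delta>)" "a > 0"
  shows "c * (real a + 1) \<le> real p powr (a * \<delta>)"
proof -
  have "((2 * c) powr (1 / \<delta>)) powr \<delta> = 2 * c"
    using assms(1,2) by (simp add: powr_powr)
  then have "real p powr \<delta> \<ge> 2 * c"
    using assms(1,4) powr_mono2[of \<delta> "(2 * c) powr (1 / \<delta>)" "real p"] by (metis less_imp_le powr_ge_zero)
  then have "(2 * c) ^ a \<le> (real p powr \<delta>) ^ a"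
    using assms(2) by (intro power_mono) auto
  moreover have "real p powr (a * \<delta>) = (real p powr \<delta>) ^ a"
    using prime_gt_0_nat[OF assms(3)] by (simp add: powr_realpow[symmetric] powr_powr ac_simps)
  moreover have "(2 * c) ^ a = 2 ^ a * c ^ a"
    by (simp add: power_mult_distrib)
  moreover have "c \<le> c ^ a"
    using power_increasing[of 1 a c] assms(2,5) by simp
  moreover have "real a + 1 \<le> 2 ^ a"
  proof -
    have "a + 1 \<le> (2::nat) ^ a" by (induction a) auto
    then have "real (a + 1) \<le> real ((2::nat) ^ a)" by (simp only: of_nat_le_iff)
    then show ?thesis by simp
  qed
  ultimately show ?thesis
    using assms(2) by (smt (verit, best) mult_mono mult.commute of_nat_0_le_iff)
qed

text \<open>
  Each prime power factor contributes at most \<open>c (a + 1) \<le> p\<^bsup>a\<delta>\<^esup>\<close>, except for the finitely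
  many primes below \<open>P\<close>, each of which costs an extra factor \<open>K\<close>.
\<close>
lemma submultiplicative_le_powr_small_primes:
  fixes h :: "nat \<Rightarrow> real" and c \<delta> K P :: real
  assumes h_1: "h 1 \<le> 1"
    and h_step: "\<And>p a m. prime p \<Longrightarrow> a > 0 \<Longrightarrow> m > 0 \<Longrightarrow> \<not> p dvd m \<Longrightarrow> h (p ^ a * m) \<le> c * (real a + 1) * h m"
    and "c \<ge> 0" "K \<ge> 1"
    and small: "\<And>(p::nat) (a::nat). prime p \<Longrightarrow> c * (real a + 1) \<le> K * real p powr (a * \<delta>)"
    and large: "\<And>(p::nat) (a::nat). prime p \<Longrightarrow> real p \<ge> P \<Longrightarrow> a > 0 \<Longrightarrow> c * (real a + 1) \<le> real p powr (a * \<delta>)"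
    and "n > 0"
  shows "h n \<le> K ^ card {p \<in> prime_factors n. real p < P} * real n powr \<delta>"
  using \<open>n > 0\<close>
proof (induction n rule: less_induct)
  case (less n)
  define S where "S n = {p \<in> prime_factors n. real p < P}" for n
  show ?case
  proof (cases "n = 1")
    case True
    then show ?thesis using h_1 by simp
  next
    case False
    with less.prems have "n > 1" by simp
    then obtain p a m where pam: "prime p" "a > 0" "m > 0" "\<not> p dvd m" "n = p ^ a * m" "m < n"
      by (rule obtain_prime_power_coprime_factor)
    have pf: "prime_factors n = insert p (prime_factors m)" "p \<notin> prime_factors m"
      using prime_factors_prime_power_mult[OF pam(1-4)] pam by auto
    have n_powr: "real n powr \<delta> = real p powr (a * \<delta>) * real m powr \<delta>"
      using pam prime_gt_0_nat[OF pam(1)]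
      by (simp add: powr_mult powr_realpow[symmetric] powr_powr)
    have "h n \<le> c * (real a + 1) * h m"
      using h_step pam by blast
    also have "\<dots> \<le> c * (real a + 1) * (K ^ card (S m) * real m powr \<delta>)"
      using less.IH[OF pam(6,3)] \<open>c \<ge> 0\<close> unfolding S_def by (intro mult_left_mono) auto
    also have "\<dots> \<le> K ^ card (S n) * real n powr \<delta>"
    proof (cases "real p < P")
      case True
      then have "S n = insert p (S m)" "p \<notin> S m"
        using pf unfolding S_def by auto
      then have "K ^ card (S n) = K * K ^ card (S m)"
        unfolding S_def by simp
      have "c * (real a + 1) * (K ^ card (S m) * real m powr \<delta>)
          \<le> K * real p powr (a * \<delta>) * (K ^ card (S m) * real m powr \<delta>)"
        using small[OF pam(1), of a] \<open>K \<ge> 1\<close> by (intro mult_right_mono) auto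
      then show ?thesis
        using \<open>K ^ card (S n) = K * K ^ card (S m)\<close> n_powr by (simp add: ac_simps)
    next
      case False
      then have "S n = S m"
        using pf unfolding S_def by auto
      have "c * (real a + 1) * (K ^ card (S m) * real m powr \<delta>)
          \<le> real p powr (a * \<delta>) * (K ^ card (S m) * real m powr \<delta>)"
        using large[OF pam(1) _ pam(2)] False \<open>K \<ge> 1\<close> by (intro mult_right_mono) auto
      then show ?thesis
        using \<open>S n = S m\<close> n_powr by (simp add: ac_simps)
    qed
    finally show ?thesis unfolding S_def .
  qed
qed

lemma submultiplicative_le_powr:
  fixes h :: "nat \<Rightarrow> real" and c \<delta> :: real
  assumes "\<delta> > 0" "c \<ge> 1" and h_1: "h 1 \<le> 1"
    and h_step: "\<And>p a m. prime p \<Longrightarrow> a > 0 \<Longrightarrow> m > 0 \<Longrightarrow> \<not> p dvd m \<Longrightarrow> h (p ^ a * m) \<le> c * (real a + 1) * h m"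
  obtains C where "C > 0" "\<And>n. n > 0 \<Longrightarrow> h n \<le> C * real n powr \<delta>"
proof -
  obtain K where K: "K \<ge> 1" "\<And>(p::nat) (a::nat). prime p \<Longrightarrow> c * (real a + 1) \<le> K * real p powr (a * \<delta>)"
    using linear_le_prime_power_powr[OF assms(1,2)] by blast
  define P where "P = (2 * c) powr (1 / \<delta>)"
  define C where "C = K ^ nat \<lceil>P\<rceil>"
  have "C > 0" unfolding C_def using K(1) by simp
  moreover have "h n \<le> C * real n powr \<delta>" if "n > 0" for n
  proof -
    have "{p \<in> prime_factors n. real p < P} \<subseteq> {..<nat \<lceil>P\<rceil>}"
      by auto linarith
    then have "card {p \<in> prime_factors n. real p < P} \<le> nat \<lceil>P\<rceil>"
      by (metis card_lessThan card_mono finite_lessThan)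
    then have "K ^ card {p \<in> prime_factors n. real p < P} \<le> C"
      unfolding C_def using K(1) by (simp add: power_increasing)
    moreover have "h n \<le> K ^ card {p \<in> prime_factors n. real p < P} * real n powr \<delta>"
      using linear_le_large_prime_power_powr[OF assms(1,2)] assms(2) \<open>n > 0\<close> unfolding P_def
      by (intro submultiplicative_le_powr_small_primes[OF h_1 h_step _ K]) auto
    ultimately show ?thesis
      by (smt (verit) mult_right_mono powr_ge_zero)
  qed
  ultimately show ?thesis by (rule that)
qed

lemma card_divisors_prime_power_mult:
  fixes p a m :: nat
  assumes p: "prime p" and "m > 0" "\<not> p dvd m"
  shows "card {f. f dvd p ^ a * m} \<le> (a + 1) * card {f. f dvd m}"
proof -
  have "{f. f dvd p ^ a * m} \<subseteq> (\<lambda>(i, g). p ^ i * g) ` ({0..a} \<times> {g. g dvd m})"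
  proof
    fix f assume "f \<in> {f. f dvd p ^ a * m}"
    then have f_dvd: "f dvd p ^ a * m" by simp
    moreover have "p ^ a * m \<noteq> 0" using assms by (simp add: prime_gt_0_nat)
    ultimately have "f \<noteq> 0" by (metis dvd_0_left)
    define i where "i = multiplicity p f"
    define g where "g = f div p ^ i"
    have f_eq: "f = p ^ i * g"
      unfolding g_def i_def using multiplicity_dvd[of p f] by simp
    have "\<not> p dvd g"
      unfolding g_def i_def using \<open>f \<noteq> 0\<close> p by (intro multiplicity_decompose) (auto simp: not_prime_unit)
    then have "coprime g (p ^ a)"
      using prime_imp_coprime[OF p] by (simp add: coprime_commute)
    moreover have "g dvd p ^ a * m" using f_dvd f_eq by (metis dvd_mult_right)
    ultimately have "g dvd m" using coprime_dvd_mult_right_iff by blast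
    have "coprime (p ^ i) m"
      using prime_imp_coprime[OF p assms(3)] by simp
    moreover have "p ^ i dvd p ^ a * m" using f_dvd f_eq by (metis dvd_mult_left)
    ultimately have "p ^ i dvd p ^ a"
      using coprime_dvd_mult_left_iff by blast
    then have "i \<le> a"
      using power_dvd_imp_le prime_gt_1_nat[OF p] by blast
    with \<open>g dvd m\<close> show "f \<in> (\<lambda>(i, g). p ^ i * g) ` ({0..a} \<times> {g. g dvd m})"
      using f_eq by force
  qed
  moreover have fin: "finite ({0..a} \<times> {g. g dvd m})"
    using \<open>m > 0\<close> by (simp add: finite_divisors_nat)
  ultimately have "card {f. f dvd p ^ a * m} \<le> card ((\<lambda>(i, g). p ^ i * g) ` ({0..a} \<times> {g. g dvd m}))"
    by (intro card_mono) auto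
  also have "\<dots> \<le> card ({0..a} \<times> {g. g dvd m})"
    using fin by (rule card_image_le)
  finally show ?thesis by (simp add: card_cartesian_product)
qed

lemma card_divisors_le_powr:
  fixes \<delta> :: real
  assumes "\<delta> > 0"
  obtains C where "C > 0" "\<And>n :: nat. n > 0 \<Longrightarrow> real (card {f. f dvd n}) \<le> C * real n powr \<delta>"
proof (rule submultiplicative_le_powr[where h = "\<lambda>n. real (card {f. f dvd n})", OF assms order.refl])
  fix p a m :: nat
  assume "prime p" "a > 0" "m > 0" "\<not> p dvd m"
  then have "card {f. f dvd p ^ a * m} \<le> (a + 1) * card {f. f dvd m}"
    by (intro card_divisors_prime_power_mult)
  then have "real (card {f. f dvd p ^ a * m}) \<le> real ((a + 1) * card {f. f dvd m})"
    by (simp only: of_nat_le_iff)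
  then show "real (card {f. f dvd p ^ a * m}) \<le> 1 * (real a + 1) * real (card {f. f dvd m})"
    by (simp add: algebra_simps)
qed simp_all

lemma pow_card_prime_factors_le_powr:
  fixes b \<delta> :: real
  assumes "\<delta> > 0" "b \<ge> 1"
  obtains C where "C > 0" "\<And>n :: nat. n > 0 \<Longrightarrow> b ^ card (prime_factors n) \<le> C * real n powr \<delta>"
proof (rule submultiplicative_le_powr[where h = "\<lambda>n. b ^ card (prime_factors n)", OF assms])
  fix p a m :: nat
  assume "prime p" "a > 0" "m > 0" "\<not> p dvd m"
  then have "b ^ card (prime_factors (p ^ a * m)) = b * (1 * b ^ card (prime_factors m))"
    using card_prime_factors_prime_power_mult by simp
  also have "\<dots> \<le> b * ((real a + 1) * b ^ card (prime_factors m))"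
    using assms(2) by (intro mult_left_mono mult_right_mono) auto
  finally show "b ^ card (prime_factors (p ^ a * m)) \<le> b * (real a + 1) * b ^ card (prime_factors m)"
    by (simp add: mult.assoc)
qed simp_all

lemma card_divisors_and_pow_card_prime_factors_le_powr:
  fixes \<delta> b :: real
  assumes "\<delta> > 0" "b \<ge> 1"
  obtains C where "C > 0"
    "\<And>n :: nat. n > 0 \<Longrightarrow> real (card {f. f dvd n}) \<le> C * real n powr \<delta>"
    "\<And>n :: nat. n > 0 \<Longrightarrow> b ^ card (prime_factors n) \<le> C * real n powr \<delta>"
proof -
  obtain C1 where "C1 > 0" and C1: "\<And>n :: nat. n > 0 \<Longrightarrow> real (card {f. f dvd n}) \<le> C1 * real n powr \<delta>"
    using card_divisors_le_powr[OF assms(1)] by blast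
  obtain C2 where "C2 > 0" and C2: "\<And>n :: nat. n > 0 \<Longrightarrow> b ^ card (prime_factors n) \<le> C2 * real n powr \<delta>"
    using pow_card_prime_factors_le_powr[OF assms] by blast
  define C where "C = max C1 C2"
  have le_C: "C1 * real n powr \<delta> \<le> C * real n powr \<delta>" "C2 * real n powr \<delta> \<le> C * real n powr \<delta>"
    for n :: nat
    unfolding C_def by (simp_all add: mult_right_mono)
  show ?thesis
  proof (rule that)
    show "C > 0"
      unfolding C_def using \<open>C1 > 0\<close> by simp
  next
    fix n :: nat assume "n > 0"
    show "real (card {f. f dvd n}) \<le> C * real n powr \<delta>"
      using C1[OF \<open>n > 0\<close>] le_C(1) by (rule order_trans)
  next
    fix n :: nat assume "n > 0"
    show "b ^ card (prime_factors n) \<le> C * real n powr \<delta>"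
      using C2[OF \<open>n > 0\<close>] le_C(2) by (rule order_trans)
  qed
qed

section \<open>Counting \<open>k\<close>-th roots modulo \<open>n\<close>\<close>

definition kth_roots_mod :: "nat \<Rightarrow> int \<Rightarrow> nat \<Rightarrow> int set" where
  "kth_roots_mod k c n = {x. 0 \<le> x \<and> x < int n \<and> [x ^ k = c] (mod int n)}"

lemma finite_kth_roots_mod [simp]: "finite (kth_roots_mod k c n)"
  unfolding kth_roots_mod_def by (rule finite_subset[of _ "{0..<int n}"]) auto

lemma card_kth_roots_mod_le_modulus: "card (kth_roots_mod k c n) \<le> n"
proof -
  have "card (kth_roots_mod k c n) \<le> card {0..<int n}"
    unfolding kth_roots_mod_def by (intro card_mono) auto
  then show ?thesis by simp
qed

lemma mod_in_kth_roots_mod: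
  fixes x :: int and e n :: nat
  assumes "[x ^ k = c] (mod int e)" "n dvd e" "n > 0"
  shows "x mod int n \<in> kth_roots_mod k c n"
proof -
  have "[(x mod int n) ^ k = x ^ k] (mod int n)"
    by (intro cong_pow) simp
  moreover have "[x ^ k = c] (mod int n)"
    using assms by (meson cong_dvd_modulus of_nat_dvd_iff)
  ultimately show ?thesis
    unfolding kth_roots_mod_def using assms(3) cong_trans by auto
qed

lemma card_kth_roots_mod_prime:
  fixes p k :: nat and c :: int
  assumes p: "prime p" and "k > 0"
  shows "card (kth_roots_mod k c p) \<le> k"
proof -
  define A where "A = {x \<in> {..<p}. [x ^ k = nat (c mod int p)] (mod p)}"
  have "kth_roots_mod k c p \<subseteq> int ` A"
  proof
    fix z assume z: "z \<in> kth_roots_mod k c p"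
    then have "[int (nat z) ^ k = int (nat (c mod int p))] (mod int p)"
      using p by (auto simp: kth_roots_mod_def prime_gt_0_nat cong_def)
    then have "nat z \<in> A"
      using z unfolding A_def kth_roots_mod_def by (auto simp: cong_int_iff[symmetric])
    then show "z \<in> int ` A"
      using z unfolding kth_roots_mod_def by (metis (lifting) imageI mem_Collect_eq nat_0_le)
  qed
  then have "card (kth_roots_mod k c p) \<le> card (int ` A)"
    by (intro card_mono) (simp add: A_def)
  also have "\<dots> \<le> card A"
    by (rule card_image_le) (simp add: A_def)
  also have "card A \<le> k"
    unfolding A_def by (rule roots_mod_prime_bound[OF assms])
  finally show ?thesis .
qed

text \<open>
  As \<open>p\<^bsup>s\<^esup>\<close> exactly divides \<open>k\<close> and \<open>x \<equiv> y (mod p\<^bsup>s+1\<^esup>)\<close>, the cofactor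
  \<open>(x\<^bsup>k\<^esup> - y\<^bsup>k\<^esup>)/(x - y) \<equiv> k x\<^bsup>k-1\<^esup> (mod p\<^bsup>s+1\<^esup>)\<close> is not divisible by \<open>p\<^bsup>s+1\<^esup>\<close>.
\<close>
lemma prime_power_dvd_diff_if_pow_cong:
  fixes p k a :: nat and x y :: int
  assumes p: "prime p" and "k > 0" and "\<not> int p dvd x"
    and pow_cong: "[x ^ k = y ^ k] (mod int p ^ a)"
    and base_cong: "[x = y] (mod int p ^ Suc (multiplicity p k))"
  shows "int p ^ (a - multiplicity p k) dvd x - y"
proof (cases "x = y")
  case False
  define s where "s = multiplicity p k"
  define q where "q = int p"
  have q_prime: "prime q" and q_not_unit: "\<not> is_unit q"
    using p unfolding q_def by (auto simp: not_prime_unit)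
  define Q where "Q = (\<Sum>i<k. y ^ (k - Suc i) * x ^ i)"
  have "[y = x] (mod q ^ Suc s)"
    using base_cong unfolding q_def s_def by (rule cong_sym)
  then have "[y ^ n = x ^ n] (mod q ^ Suc s)" for n
    by (rule cong_pow)
  then have "[Q = (\<Sum>i<k. x ^ (k - Suc i) * x ^ i)] (mod q ^ Suc s)"
    unfolding Q_def by (auto intro!: cong_sum cong_mult)
  moreover have "(\<Sum>i<k. x ^ (k - Suc i) * x ^ i) = int k * x ^ (k - 1)"
    by (simp add: power_add[symmetric])
  ultimately have Q_cong: "[Q = int k * x ^ (k - 1)] (mod q ^ Suc s)"
    by simp
  have "\<not> p ^ Suc s dvd k"
  proof
    assume "p ^ Suc s dvd k"
    then have "Suc s \<le> multiplicity p k"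
      using multiplicity_geI[of k p "Suc s"] \<open>k > 0\<close> prime_gt_1_nat[OF p] by simp
    then show False unfolding s_def by simp
  qed
  moreover have "coprime (q ^ Suc s) (x ^ (k - 1))"
    using q_prime assms(3) unfolding q_def by (simp add: prime_imp_coprime)
  ultimately have "\<not> q ^ Suc s dvd int k * x ^ (k - 1)"
    unfolding q_def by (metis coprime_dvd_mult_left_iff of_nat_dvd_iff of_nat_power)
  then have "\<not> q ^ Suc s dvd Q"
    using Q_cong cong_dvd_iff by blast
  moreover from this have "Q \<noteq> 0" by auto
  ultimately have mult_Q: "multiplicity q Q \<le> s"
    using multiplicity_lessI[of Q q "Suc s"] q_not_unit by simp
  have "q ^ a dvd (x - y) * Q"
    using pow_cong unfolding Q_def q_def by (simp add: cong_iff_dvd_diff power_diff_sumr2)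
  then have "a \<le> multiplicity q ((x - y) * Q)"
    using False \<open>Q \<noteq> 0\<close> q_not_unit by (intro multiplicity_geI) auto
  also have "\<dots> = multiplicity q (x - y) + multiplicity q Q"
    using q_prime False \<open>Q \<noteq> 0\<close> by (intro prime_elem_multiplicity_mult_distrib) auto
  finally have "a - s \<le> multiplicity q (x - y)"
    using mult_Q by linarith
  then show ?thesis
    unfolding q_def s_def[symmetric] by (rule multiplicity_dvd')
qed simp

text \<open>
  With \<open>p\<^bsup>s\<^esup>\<close> the exact power of \<open>p\<close> dividing \<open>k\<close>, a root modulo \<open>p\<^bsup>a\<^esup>\<close> is determined by
  its residue modulo \<open>p\<^bsup>s+1\<^esup>\<close> together with its quotient by \<open>p\<^bsup>a-s\<^esup>\<close>, which is one of \<open>p\<^bsup>s\<^esup>\<close> values.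
\<close>
lemma card_kth_roots_mod_prime_power_le_lift:
  fixes p k a :: nat and c :: int
  defines "s \<equiv> multiplicity p k"
  assumes p: "prime p" and "k > 0" and "\<not> int p dvd c" and "s < a"
  shows "card (kth_roots_mod k c (p ^ a)) \<le> card (kth_roots_mod k c (p ^ Suc s)) * p ^ s"
proof -
  define q where "q = int p"
  define R where "R = kth_roots_mod k c (p ^ a)"
  have "q > 1" unfolding q_def using prime_gt_1_nat[OF p] by simp
  have root: "[x ^ k = c] (mod q ^ a)" and bounds: "0 \<le> x" "x < q ^ a" if "x \<in> R" for x
    using that unfolding R_def kth_roots_mod_def q_def by auto
  have not_dvd: "\<not> q dvd x" if "x \<in> R" for x
  proof
    assume "q dvd x"
    then have "q dvd x ^ k"
      using dvd_trans[OF \<open>q dvd x\<close> dvd_power[of k x]] \<open>k > 0\<close> by blast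
    moreover have "[x ^ k = c] (mod q)"
      using cong_dvd_modulus[OF root[OF that] dvd_power[of a q]] \<open>s < a\<close> by simp
    ultimately show False
      using assms(4) cong_dvd_iff unfolding q_def by blast
  qed
  define \<phi> where "\<phi> x = (x mod q ^ Suc s, x div q ^ (a - s))" for x
  have "inj_on \<phi> R"
  proof
    fix x y assume x: "x \<in> R" and y: "y \<in> R" and "\<phi> x = \<phi> y"
    then have "[x = y] (mod q ^ Suc s)" and div_eq: "x div q ^ (a - s) = y div q ^ (a - s)"
      unfolding \<phi>_def cong_def by simp_all
    moreover have "[x ^ k = y ^ k] (mod q ^ a)"
      using root[OF x] root[OF y] by (meson cong_sym cong_trans)
    ultimately have "q ^ (a - s) dvd x - y"
      using prime_power_dvd_diff_if_pow_cong[OF p \<open>k > 0\<close>] not_dvd[OF x] unfolding q_def s_def by blast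
    then show "x = y"
      using div_eq by (metis div_mult_mod_eq mod_eq_dvd_iff)
  qed
  moreover have "\<phi> ` R \<subseteq> kth_roots_mod k c (p ^ Suc s) \<times> {0..<q ^ s}"
  proof
    fix z assume "z \<in> \<phi> ` R"
    then obtain x where x: "x \<in> R" and z: "z = \<phi> x" by blast
    have "q ^ a = q ^ (a - s) * q ^ s"
      using \<open>s < a\<close> by (simp add: power_add[symmetric])
    then have "q ^ (a - s) * (x div q ^ (a - s)) < q ^ (a - s) * q ^ s"
      using bounds[OF x] \<open>q > 1\<close> by (smt (verit) div_mult_mod_eq mult.commute pos_mod_sign zero_less_power)
    then have "x div q ^ (a - s) \<in> {0..<q ^ s}"
      using bounds[OF x] \<open>q > 1\<close> by (simp add: pos_imp_zdiv_nonneg_iff)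
    moreover have "x mod int (p ^ Suc s) \<in> kth_roots_mod k c (p ^ Suc s)"
    proof (rule mod_in_kth_roots_mod)
      show "[x ^ k = c] (mod int (p ^ a))" using root[OF x] unfolding q_def by simp
      show "p ^ Suc s dvd p ^ a" using \<open>s < a\<close> by (intro le_imp_power_dvd) simp
      show "p ^ Suc s > 0" using prime_gt_0_nat[OF p] by simp
    qed
    ultimately show "z \<in> kth_roots_mod k c (p ^ Suc s) \<times> {0..<q ^ s}"
      unfolding z \<phi>_def q_def by simp
  qed
  ultimately have "card R \<le> card (kth_roots_mod k c (p ^ Suc s) \<times> {0..<q ^ s})"
    by (metis card_image card_mono finite_SigmaI finite_atLeastLessThan_int finite_kth_roots_mod)
  then show ?thesis
    unfolding R_def q_def by (simp add: card_cartesian_product nat_power_eq)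
qed

lemma card_kth_roots_mod_prime_power:
  fixes p k a :: nat and c :: int
  assumes p: "prime p" and "k > 0" and "\<not> int p dvd c"
  shows "card (kth_roots_mod k c (p ^ a)) \<le> k ^ 3"
proof -
  define s where "s = multiplicity p k"
  have "p ^ s \<le> k"
    unfolding s_def using \<open>k > 0\<close> by (simp add: dvd_imp_le multiplicity_dvd)
  have "k \<le> k ^ 3"
    using \<open>k > 0\<close> by (simp add: power3_eq_cube)
  show ?thesis
  proof (cases "a \<le> s")
    case True
    have "p ^ a \<le> p ^ s"
      using True prime_gt_0_nat[OF p] by (simp add: power_increasing)
    then have "card (kth_roots_mod k c (p ^ a)) \<le> p ^ s"
      using card_kth_roots_mod_le_modulus[of k c "p ^ a"] by linarith
    then show ?thesis using \<open>p ^ s \<le> k\<close> \<open>k \<le> k ^ 3\<close> by linarith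
  next
    case False
    then have lift: "card (kth_roots_mod k c (p ^ a)) \<le> card (kth_roots_mod k c (p ^ Suc s)) * p ^ s"
      unfolding s_def by (intro card_kth_roots_mod_prime_power_le_lift[OF assms]) simp
    show ?thesis
    proof (cases "s = 0")
      case True
      then show ?thesis
        using lift card_kth_roots_mod_prime[OF p \<open>k > 0\<close>, of c] \<open>k \<le> k ^ 3\<close> by simp
    next
      case False
      then have "p \<le> k"
        using \<open>p ^ s \<le> k\<close> power_increasing[of 1 s p] prime_gt_0_nat[OF p] by simp
      have "card (kth_roots_mod k c (p ^ Suc s)) * p ^ s \<le> p * p ^ s * p ^ s"
        using card_kth_roots_mod_le_modulus[of k c "p ^ Suc s"] by simp
      also have "\<dots> \<le> k * k * k"
        using \<open>p \<le> k\<close> \<open>p ^ s \<le> k\<close> by (intro mult_le_mono) auto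
      finally show ?thesis
        using lift by (simp add: power3_eq_cube)
    qed
  qed
qed

lemma card_kth_roots_mod_mult_le:
  fixes m n :: nat
  assumes "coprime m n" "m > 0" "n > 0"
  shows "card (kth_roots_mod k c (m * n)) \<le> card (kth_roots_mod k c m) * card (kth_roots_mod k c n)"
proof -
  define \<psi> where "\<psi> x = (x mod int m, x mod int n)" for x
  have "inj_on \<psi> (kth_roots_mod k c (m * n))"
  proof
    fix x y assume "x \<in> kth_roots_mod k c (m * n)" "y \<in> kth_roots_mod k c (m * n)" "\<psi> x = \<psi> y"
    moreover have "coprime (int m) (int n)" using assms(1) by simp
    ultimately have "int m * int n dvd x - y" "x mod (int m * int n) = x" "y mod (int m * int n) = y"
      unfolding \<psi>_def kth_roots_mod_def by (auto simp: mod_eq_dvd_iff divides_mult)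
    then show "x = y" by (metis mod_eq_dvd_iff)
  qed
  moreover have "\<psi> ` kth_roots_mod k c (m * n) \<subseteq> kth_roots_mod k c m \<times> kth_roots_mod k c n"
  proof
    fix z assume "z \<in> \<psi> ` kth_roots_mod k c (m * n)"
    then obtain x where "[x ^ k = c] (mod int (m * n))" and "z = \<psi> x"
      unfolding kth_roots_mod_def by auto
    then show "z \<in> kth_roots_mod k c m \<times> kth_roots_mod k c n"
      unfolding \<psi>_def using mod_in_kth_roots_mod[of x k c "m * n" m] mod_in_kth_roots_mod[of x k c "m * n" n] assms(2,3)
      by simp
  qed
  ultimately show ?thesis
    by (metis card_cartesian_product card_image card_mono finite_SigmaI finite_kth_roots_mod)
qed

lemma card_kth_roots_mod_le:
  fixes n k :: nat and c :: int
  assumes "n > 0" "k > 0" "coprime c (int n)"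
  shows "card (kth_roots_mod k c n) \<le> (k ^ 3) ^ card (prime_factors n)"
  using assms
proof (induction n rule: less_induct)
  case (less n)
  show ?case
  proof (cases "n = 1")
    case True
    have "kth_roots_mod k c n = {0}"
      unfolding kth_roots_mod_def True by auto
    then show ?thesis using True by simp
  next
    case False
    with less.prems have "n > 1" by simp
    then obtain p a m where pam: "prime p" "a > 0" "m > 0" "\<not> p dvd m" "n = p ^ a * m" "m < n"
      by (rule obtain_prime_power_coprime_factor)
    have "coprime c (int p ^ a * int m)"
      using less.prems(3) pam(5) by simp
    then have "coprime c (int p)" and "coprime c (int m)"
      using pam(2) by auto
    have "\<not> int p dvd c"
    proof
      assume "int p dvd c"
      then have "is_unit (int p)"
        using coprime_common_divisor[OF \<open>coprime c (int p)\<close> _ dvd_refl] by blast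
      then show False
        using pam(1) by (metis not_prime_unit prime_nat_int_transfer)
    qed
    have "coprime (p ^ a) m"
      using pam(1,4) by (simp add: prime_imp_coprime)
    then have "card (kth_roots_mod k c n) \<le> card (kth_roots_mod k c (p ^ a)) * card (kth_roots_mod k c m)"
      using card_kth_roots_mod_mult_le[of "p ^ a" m k c] pam prime_gt_0_nat by simp
    also have "\<dots> \<le> k ^ 3 * (k ^ 3) ^ card (prime_factors m)"
      using card_kth_roots_mod_prime_power[OF pam(1) less.prems(2) \<open>\<not> int p dvd c\<close>]
        less.IH[OF pam(6,3) less.prems(2) \<open>coprime c (int m)\<close>]
      by (rule mult_le_mono)
    finally show ?thesis
      using card_prime_factors_prime_power_mult[OF pam(1-4)] pam(5) by simp
  qed
qed

section \<open>Counting pairs in a box\<close>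

lemma card_residue_class_in_interval:
  fixes e X :: nat and r :: int
  assumes "e > 0"
  shows "real (card {a::int. \<bar>a\<bar> \<le> int X \<and> a mod int e = r}) \<le> 2 * real X / real e + 2"
proof -
  define L where "L = (- int X) div int e"
  define U where "U = int X div int e"
  let ?A = "{a::int. \<bar>a\<bar> \<le> int X \<and> a mod int e = r}"
  have "inj_on (\<lambda>a. a div int e) ?A"
    by (rule inj_onI) (metis (mono_tags, lifting) mem_Collect_eq div_mult_mod_eq)
  have image_sub: "(\<lambda>a. a div int e) ` ?A \<subseteq> {L..U}"
  proof
    fix q assume "q \<in> (\<lambda>a. a div int e) ` ?A"
    then obtain a where "\<bar>a\<bar> \<le> int X" "q = a div int e"
      by blast
    then have "- int X \<le> a" "a \<le> int X" "q = a div int e"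
      by auto
    then show "q \<in> {L..U}"
      unfolding L_def U_def using assms by (simp add: zdiv_mono1)
  qed
  have "card ?A = card ((\<lambda>a. a div int e) ` ?A)"
    using \<open>inj_on (\<lambda>a. a div int e) ?A\<close> by (rule card_image[symmetric])
  also have "\<dots> \<le> card {L..U}"
    by (rule card_mono[OF finite_atLeastAtMost_int image_sub])
  finally have "real (card ?A) \<le> real (nat (U - L + 1))"
    by simp
  have "U * int e \<le> int X" "- int X < (L + 1) * int e"
    unfolding U_def L_def using assms
    by (simp_all add: algebra_simps minus_mod_eq_mult_div[symmetric])
  then have "(U - L - 1) * int e < 2 * int X"
    by (simp add: algebra_simps)
  then have "real_of_int ((U - L - 1) * int e) < real_of_int (2 * int X)"
    by (simp only: of_int_less_iff)
  then have "real_of_int (U - L - 1) * real e < 2 * real X"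
    by simp
  then have "real_of_int (U - L - 1) < 2 * real X / real e"
    using assms by (simp add: less_divide_eq)
  then have "real (nat (U - L + 1)) \<le> 2 * real X / real e + 2"
    using assms by (cases "U - L + 1 \<ge> 0") (auto simp: divide_nonneg_nonneg)
  with \<open>real (card ?A) \<le> real (nat (U - L + 1))\<close> show ?thesis
    by linarith
qed

lemma card_pow_cong_in_interval:
  fixes e k X :: nat and c :: int
  assumes "e > 0"
  shows "real (card {a::int. \<bar>a\<bar> \<le> int X \<and> [a ^ k = c] (mod int e)})
     \<le> real (card (kth_roots_mod k c e)) * (2 * real X / real e + 2)"
proof -
  let ?R = "kth_roots_mod k c e"
  let ?S = "\<lambda>r. {a::int. \<bar>a\<bar> \<le> int X \<and> a mod int e = r}"
  have "{a::int. \<bar>a\<bar> \<le> int X \<and> [a ^ k = c] (mod int e)} \<subseteq> (\<Union>r\<in>?R. ?S r)"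
  proof
    fix a assume "a \<in> {a::int. \<bar>a\<bar> \<le> int X \<and> [a ^ k = c] (mod int e)}"
    moreover from this have "a mod int e \<in> ?R"
      using mod_in_kth_roots_mod[of a k c e e] assms by simp
    ultimately show "a \<in> (\<Union>r\<in>?R. ?S r)" by blast
  qed
  moreover have "finite (?S r)" for r
    by (rule finite_subset[of _ "{- int X..int X}"]) auto
  ultimately have "card {a::int. \<bar>a\<bar> \<le> int X \<and> [a ^ k = c] (mod int e)} \<le> card (\<Union>r\<in>?R. ?S r)"
    by (intro card_mono) auto
  also have "\<dots> \<le> (\<Sum>r\<in>?R. card (?S r))"
    by (rule card_UN_le) simp
  finally have "real (card {a::int. \<bar>a\<bar> \<le> int X \<and> [a ^ k = c] (mod int e)}) \<le> real (\<Sum>r\<in>?R. card (?S r))"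
    by (simp only: of_nat_le_iff)
  also have "\<dots> = (\<Sum>r\<in>?R. real (card (?S r)))"
    by simp
  also have "\<dots> \<le> (\<Sum>r\<in>?R. 2 * real X / real e + 2)"
    by (intro sum_mono card_residue_class_in_interval assms)
  finally show ?thesis by simp
qed

lemma coprime_modulus_if_pow_cong:
  fixes a b :: int and e k :: nat
  assumes "coprime a b" and "[a ^ k = b ^ k] (mod int e)" and "k > 0"
  shows "coprime b (int e)"
proof (rule coprimeI)
  fix t assume "t dvd b" and "t dvd int e"
  moreover have "int e dvd a ^ k - b ^ k"
    using assms(2) by (simp add: cong_iff_dvd_diff)
  ultimately have "t dvd a ^ k - b ^ k"
    using dvd_trans by blast
  moreover have "t dvd b ^ k"
    using dvd_trans[OF \<open>t dvd b\<close> dvd_power[of k b]] assms(3) by simp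
  ultimately have "t dvd a ^ k"
    by (metis diff_add_cancel dvd_add)
  moreover have "coprime (a ^ k) b"
    using assms(1) by simp
  ultimately show "is_unit t"
    using \<open>t dvd b\<close> coprime_common_divisor by blast
qed

definition pow_cong_pairs :: "nat \<Rightarrow> nat \<Rightarrow> nat \<Rightarrow> (int \<times> int) set" where
  "pow_cong_pairs k d X = {(u, v). \<bar>u\<bar> \<le> int X \<and> \<bar>v\<bar> \<le> int X \<and> [u ^ k = v ^ k] (mod int d)}"

definition coprime_pow_cong_pairs :: "nat \<Rightarrow> nat \<Rightarrow> nat \<Rightarrow> (int \<times> int) set" where
  "coprime_pow_cong_pairs k d X = {(a, b) \<in> pow_cong_pairs k d X. coprime a b}"

lemma finite_pow_cong_pairs [simp]: "finite (pow_cong_pairs k d X)"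
  unfolding pow_cong_pairs_def
  by (rule finite_subset[of _ "{- int X..int X} \<times> {- int X..int X}"]) auto

lemma finite_coprime_pow_cong_pairs [simp]: "finite (coprime_pow_cong_pairs k d X)"
  unfolding coprime_pow_cong_pairs_def by (rule finite_subset[OF _ finite_pow_cong_pairs]) auto

text \<open>
  For fixed \<open>b\<close>, coprimality forces \<open>b\<^bsup>k\<^esup>\<close> to be a unit modulo \<open>e\<close>, so the admissible \<open>a\<close>
  lie in at most \<open>W\<close> residue classes.
\<close>
lemma card_coprime_pow_cong_pairs_le:
  fixes e k X :: nat and W :: real
  assumes "e > 0" "k > 0"
    and roots: "\<And>c. coprime c (int e) \<Longrightarrow> real (card (kth_roots_mod k c e)) \<le> W"
  shows "real (card (coprime_pow_cong_pairs k e X)) \<le> (2 * real X + 1) * (W * (2 * real X / real e + 2))"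
proof -
  let ?A = "\<lambda>b. {a::int. \<bar>a\<bar> \<le> int X \<and> coprime a b \<and> [a ^ k = b ^ k] (mod int e)}"
  define Q where "Q = 2 * real X / real e + 2"
  have "Q \<ge> 0" unfolding Q_def by simp
  have "W \<ge> 0"
    using roots[of 1] by (meson coprime_1_left of_nat_0_le_iff order_trans)
  have fin: "finite (?A b)" for b
    by (rule finite_subset[of _ "{- int X..int X}"]) auto
  have card_A: "real (card (?A b)) \<le> W * Q" for b
  proof (cases "?A b = {}")
    case True
    then show ?thesis by (subst True) (use \<open>W \<ge> 0\<close> \<open>Q \<ge> 0\<close> in simp)
  next
    case False
    then obtain a where "coprime a b" "[a ^ k = b ^ k] (mod int e)"
      by auto
    then have "coprime (b ^ k) (int e)"
      using coprime_modulus_if_pow_cong assms(2) by simp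
    have "finite {a::int. \<bar>a\<bar> \<le> int X \<and> [a ^ k = b ^ k] (mod int e)}"
      by (rule finite_subset[of _ "{- int X..int X}"]) auto
    then have "card (?A b) \<le> card {a::int. \<bar>a\<bar> \<le> int X \<and> [a ^ k = b ^ k] (mod int e)}"
      by (rule card_mono) auto
    then have "real (card (?A b)) \<le> real (card (kth_roots_mod k (b ^ k) e)) * Q"
      using card_pow_cong_in_interval[OF assms(1), of X k "b ^ k"] unfolding Q_def by linarith
    also have "\<dots> \<le> W * Q"
      using roots[OF \<open>coprime (b ^ k) (int e)\<close>] \<open>Q \<ge> 0\<close> by (rule mult_right_mono)
    finally show ?thesis .
  qed
  have "coprime_pow_cong_pairs k e X \<subseteq> (\<Union>b\<in>{- int X..int X}. (\<lambda>a. (a, b)) ` ?A b)"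
  proof
    fix z assume "z \<in> coprime_pow_cong_pairs k e X"
    then obtain a b where "z = (a, b)" "\<bar>a\<bar> \<le> int X" "\<bar>b\<bar> \<le> int X" "coprime a b"
        "[a ^ k = b ^ k] (mod int e)"
      unfolding coprime_pow_cong_pairs_def pow_cong_pairs_def by blast
    then show "z \<in> (\<Union>b\<in>{- int X..int X}. (\<lambda>a. (a, b)) ` ?A b)"
      by (intro UN_I[of b]) auto
  qed
  then have "card (coprime_pow_cong_pairs k e X) \<le> card (\<Union>b\<in>{- int X..int X}. (\<lambda>a. (a, b)) ` ?A b)"
    using fin by (intro card_mono) auto
  also have "\<dots> \<le> (\<Sum>b\<in>{- int X..int X}. card ((\<lambda>a. (a, b)) ` ?A b))"
    by (rule card_UN_le) simp
  also have "\<dots> \<le> (\<Sum>b\<in>{- int X..int X}. card (?A b))"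
    by (intro sum_mono card_image_le fin)
  finally have "real (card (coprime_pow_cong_pairs k e X)) \<le> real (\<Sum>b\<in>{- int X..int X}. card (?A b))"
    by (simp only: of_nat_le_iff)
  also have "\<dots> = (\<Sum>b\<in>{- int X..int X}. real (card (?A b)))"
    by simp
  also have "\<dots> \<le> (\<Sum>b\<in>{- int X..int X}. W * Q)"
    by (intro sum_mono card_A)
  also have "\<dots> = (2 * real X + 1) * (W * Q)"
    by simp
  finally show ?thesis unfolding Q_def .
qed

lemma card_coprime_pow_cong_pairs_div_le:
  fixes e k g M :: nat and W :: real
  assumes "e > 0" "k > 0" "1 \<le> g" "g \<le> M"
    and roots: "\<And>c. coprime c (int e) \<Longrightarrow> real (card (kth_roots_mod k c e)) \<le> W"
  shows "real (card (coprime_pow_cong_pairs k e (M div g)))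
    \<le> W * (6 * real M ^ 2 / (real g ^ 2 * real e) + 6 * real M / real g)"
proof -
  define x where "x = real (M div g)"
  have "W \<ge> 0"
    using roots[of 1] by (meson coprime_1_left of_nat_0_le_iff order_trans)
  have "x \<le> real M / real g"
    unfolding x_def by (rule of_nat_div_le_of_nat)
  moreover have "real M / real g \<ge> 1"
    using assms(3,4) by (simp add: le_divide_eq)
  ultimately have "(2 * x + 1) * (W * (2 * x / real e + 2))
      \<le> (3 * (real M / real g)) * (W * (2 * (real M / real g) / real e + 2))"
    using \<open>W \<ge> 0\<close> assms(1) unfolding x_def
    by (intro mult_mono mult_left_mono add_mono divide_right_mono) auto
  also have "\<dots> = W * (6 * real M ^ 2 / (real g ^ 2 * real e) + 6 * real M / real g)"
    using assms(1,3) by (simp add: field_simps power2_eq_square)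
  finally show ?thesis
    using card_coprime_pow_cong_pairs_le[OF assms(1,2) roots, of "M div g"] unfolding x_def by linarith
qed

section \<open>Sums over the common divisor\<close>

lemma sum_inverse_le_ln:
  fixes n :: nat
  assumes "n \<ge> 1"
  shows "(\<Sum>g=1..n. 1 / real g) \<le> 1 + ln (real n)"
  using assms
proof (induction n rule: dec_induct)
  case (step n)
  have "ln (real n / real (Suc n)) \<le> real n / real (Suc n) - 1"
    using step by (intro ln_le_minus_one) simp
  also have "real n / real (Suc n) - 1 = - (1 / real (Suc n))"
    by (simp add: field_simps)
  finally have "1 / real (Suc n) \<le> ln (real (Suc n)) - ln (real n)"
    using step by (simp add: ln_div)
  then show ?case using step by simp
qed simp

lemma sum_inverse_squares_le:
  fixes n :: nat
  assumes "n \<ge> 1"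
  shows "(\<Sum>j=1..n. 1 / real j ^ 2) \<le> 2 - 1 / real n"
  using assms
proof (induction n rule: dec_induct)
  case (step n)
  define y where "y = real n + 1"
  have "y > 0" "real n > 0" using step unfolding y_def by auto
  have "real n * (1 + y) \<le> y ^ 2"
    unfolding y_def by (simp add: power2_eq_square algebra_simps)
  then have "(1 + y) / y ^ 2 \<le> 1 / real n"
    using \<open>y > 0\<close> \<open>real n > 0\<close> by (simp add: divide_le_eq le_divide_eq mult.commute)
  moreover have "(1 + y) / y ^ 2 = 1 / y ^ 2 + 1 / y"
    using \<open>y > 0\<close> by (simp add: add_divide_distrib power2_eq_square)
  ultimately have "1 / (real n + 1) ^ 2 + 1 / (real n + 1) \<le> 1 / real n"
    unfolding y_def by simp
  then show ?case using step by (simp add: add.commute)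
qed simp

lemma least_base_of_dvd_pow:
  fixes f k :: nat
  assumes "f > 0" "k > 0"
  obtains r where "r > 0" "f dvd r ^ k" "\<And>g. g > 0 \<Longrightarrow> f dvd g ^ k \<Longrightarrow> r dvd g"
proof -
  define r where "r = (LEAST r. r > 0 \<and> f dvd r ^ k)"
  have r: "r > 0 \<and> f dvd r ^ k"
    unfolding r_def by (rule LeastI[of _ f]) (use assms in \<open>simp add: dvd_power\<close>)
  have "r dvd g" if "g > 0" "f dvd g ^ k" for g
  proof -
    have "f dvd gcd (g ^ k) (r ^ k)"
      using that r by (intro gcd_greatest) auto
    then have "f dvd gcd g r ^ k"
      by simp
    then have "r \<le> gcd g r"
      unfolding r_def using that by (intro Least_le) simp
    moreover have "gcd g r \<le> r"
      using r by (simp add: dvd_imp_le)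
    ultimately show ?thesis
      by (metis gcd_dvd1 order_antisym)
  qed
  then show ?thesis using that r by blast
qed

lemma div_square_le_powr_if_le_pow:
  fixes f r k :: nat
  assumes "f > 0" "k > 0" "f \<le> r ^ k"
  shows "real f / real r ^ 2 \<le> real f powr (1 - 2 / real k)"
proof -
  have "r > 0" using assms by (cases r) (auto simp: power_0_left)
  have "real f \<le> real (r ^ k)"
    using assms(3) by (simp only: of_nat_le_iff)
  then have "real f powr (2 / real k) \<le> (real r ^ k) powr (2 / real k)"
    by (intro powr_mono2) auto
  also have "(real r ^ k) powr (2 / real k) = real r powr (real k * (2 / real k))"
    using \<open>r > 0\<close> by (simp add: powr_realpow[symmetric] powr_powr)
  also have "\<dots> = real r ^ 2"
    using \<open>r > 0\<close> assms(2) by (simp add: powr_realpow)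
  finally have "real f powr (2 / real k) \<le> real r ^ 2" .
  then have "real f / real r ^ 2 \<le> real f / real f powr (2 / real k)"
    using assms(1) \<open>r > 0\<close> by (intro divide_left_mono) auto
  also have "\<dots> = real f powr (1 - 2 / real k)"
    using assms(1) by (simp add: powr_diff)
  finally show ?thesis .
qed

text \<open>
  All \<open>g\<close> with \<open>f | g\<^bsup>k\<^esup>\<close> are multiples of the least such \<open>r\<close>, and \<open>r\<^bsup>k\<^esup> \<ge> f\<close>.
\<close>
lemma sum_dvd_pow_inverse_squares_le:
  fixes f k M :: nat
  assumes "f > 0" "k > 0" "M \<ge> 1"
  shows "(\<Sum>g\<in>{g\<in>{1..M}. f dvd g ^ k}. real f / real g ^ 2) \<le> 2 * real f powr (1 - 2 / real k)"
proof -
  obtain r where "r > 0" "f dvd r ^ k" and r_dvd: "\<And>g. g > 0 \<Longrightarrow> f dvd g ^ k \<Longrightarrow> r dvd g"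
    using least_base_of_dvd_pow[OF assms(1,2)] by blast
  have "{g\<in>{1..M}. f dvd g ^ k} \<subseteq> (\<lambda>j. r * j) ` {1..M}"
  proof
    fix g assume g: "g \<in> {g\<in>{1..M}. f dvd g ^ k}"
    then have "r dvd g"
      by (intro r_dvd) auto
    then obtain j where j: "g = r * j" ..
    moreover have "j \<le> g"
      using j \<open>r > 0\<close> by simp
    ultimately have "j \<in> {1..M}"
      using g by (cases j) auto
    then show "g \<in> (\<lambda>j. r * j) ` {1..M}"
      using j by blast
  qed
  then have "(\<Sum>g\<in>{g\<in>{1..M}. f dvd g ^ k}. real f / real g ^ 2)
      \<le> (\<Sum>g\<in>(\<lambda>j. r * j) ` {1..M}. real f / real g ^ 2)"
    by (intro sum_mono2) auto
  also have "\<dots> = real f / real r ^ 2 * (\<Sum>j=1..M. 1 / real j ^ 2)"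
    using \<open>r > 0\<close> by (subst sum.reindex) (auto simp: inj_on_def sum_distrib_left power_mult_distrib)
  also have "\<dots> \<le> real f / real r ^ 2 * 2"
  proof (rule mult_left_mono)
    have "0 \<le> 1 / real M" by simp
    then show "(\<Sum>j=1..M. 1 / real j ^ 2) \<le> 2"
      using sum_inverse_squares_le[OF assms(3)] by linarith
  qed simp
  also have "\<dots> \<le> real f powr (1 - 2 / real k) * 2"
    using div_square_le_powr_if_le_pow[OF assms(1,2) dvd_imp_le[OF \<open>f dvd r ^ k\<close>]] \<open>r > 0\<close>
    by (intro mult_right_mono) auto
  finally show ?thesis by (simp add: mult.commute)
qed

lemma sum_gcd_pow_inverse_squares_le:
  fixes d k M :: nat
  assumes "d > 0" "k \<ge> 2" "M \<ge> 1"
  shows "(\<Sum>g=1..M. real (gcd d (g ^ k)) / real g ^ 2)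
     \<le> 2 * real (card {f. f dvd d}) * real d powr (1 - 2 / real k)"
proof -
  let ?D = "{f. f dvd d}"
  have "finite ?D" using assms(1) by (simp add: finite_divisors_nat)
  have "(\<Sum>g=1..M. real (gcd d (g ^ k)) / real g ^ 2)
      \<le> (\<Sum>g=1..M. \<Sum>f\<in>?D. if f dvd g ^ k then real f / real g ^ 2 else 0)"
  proof (rule sum_mono)
    fix g :: nat
    have "(if gcd d (g ^ k) dvd g ^ k then real (gcd d (g ^ k)) / real g ^ 2 else 0)
        \<le> (\<Sum>f\<in>?D. if f dvd g ^ k then real f / real g ^ 2 else 0)"
      by (rule member_le_sum) (auto simp: \<open>finite ?D\<close>)
    then show "real (gcd d (g ^ k)) / real g ^ 2 \<le> (\<Sum>f\<in>?D. if f dvd g ^ k then real f / real g ^ 2 else 0)"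
      by simp
  qed
  also have "\<dots> = (\<Sum>f\<in>?D. \<Sum>g=1..M. if f dvd g ^ k then real f / real g ^ 2 else 0)"
    by (rule sum.swap)
  also have "\<dots> = (\<Sum>f\<in>?D. \<Sum>g\<in>{g\<in>{1..M}. f dvd g ^ k}. real f / real g ^ 2)"
    by (intro sum.cong refl sum.inter_filter[symmetric]) simp
  also have "\<dots> \<le> (\<Sum>f\<in>?D. 2 * real d powr (1 - 2 / real k))"
  proof (rule sum_mono)
    fix f assume "f \<in> ?D"
    then have "f > 0" "f \<le> d"
      using assms(1) by (auto intro: Nat.gr0I dvd_imp_le)
    moreover have "1 - 2 / real k \<ge> 0"
      using assms(2) by (simp add: field_simps)
    ultimately have "real f powr (1 - 2 / real k) \<le> real d powr (1 - 2 / real k)"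
      by (intro powr_mono2) auto
    then show "(\<Sum>g\<in>{g\<in>{1..M}. f dvd g ^ k}. real f / real g ^ 2) \<le> 2 * real d powr (1 - 2 / real k)"
      using sum_dvd_pow_inverse_squares_le[OF \<open>f > 0\<close> _ assms(3), of k] assms(2) by simp
  qed
  finally show ?thesis by simp
qed

section \<open>Reduction to coprime pairs\<close>

lemma div_gcd_dvd_if_dvd_mult:
  fixes d h x :: int
  assumes "d dvd h * x" "d \<noteq> 0"
  shows "d div gcd d h dvd x"
proof -
  define G where "G = gcd d h"
  have "G \<noteq> 0" unfolding G_def using assms(2) by simp
  have "coprime (d div G) (h div G)"
    unfolding G_def using assms(2) by (intro div_gcd_coprime) simp
  have "d = G * (d div G)" "h = G * (h div G)"
    unfolding G_def by simp_all
  then have "G * (d div G) dvd G * ((h div G) * x)"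
    using assms(1) by (metis mult.assoc)
  then have "d div G dvd (h div G) * x"
    using \<open>G \<noteq> 0\<close> by simp
  then show ?thesis
    using \<open>coprime (d div G) (h div G)\<close> coprime_dvd_mult_right_iff unfolding G_def by blast
qed

lemma pow_cong_div_gcd_if_pow_cong_mult:
  fixes a b :: int and g d k :: nat
  assumes "[(int g * a) ^ k = (int g * b) ^ k] (mod int d)" "d > 0"
  shows "[a ^ k = b ^ k] (mod int (d div gcd d (g ^ k)))"
proof -
  have "int d dvd int g ^ k * (a ^ k - b ^ k)"
    using assms(1) by (simp add: cong_iff_dvd_diff power_mult_distrib algebra_simps)
  then have "int d div gcd (int d) (int g ^ k) dvd a ^ k - b ^ k"
    using assms(2) by (intro div_gcd_dvd_if_dvd_mult) auto
  moreover have "int (d div gcd d (g ^ k)) = int d div gcd (int d) (int g ^ k)"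
    by (metis gcd_int_int_eq of_nat_power zdiv_int)
  ultimately show ?thesis
    by (simp add: cong_iff_dvd_diff)
qed

lemma abs_le_div_if_abs_mult_le:
  fixes a :: int and g M :: nat
  assumes "g > 0" "\<bar>int g * a\<bar> \<le> int M"
  shows "\<bar>a\<bar> \<le> int (M div g)"
proof -
  have "\<bar>a\<bar> = \<bar>int g * a\<bar> div int g"
    using assms(1) by (simp add: abs_mult)
  also have "\<dots> \<le> int M div int g"
    using assms by (intro zdiv_mono1) auto
  finally show ?thesis
    by (simp add: zdiv_int)
qed

lemma pow_cong_pairs_subset_gcd_multiples:
  fixes k d M :: nat
  assumes "d > 0"
  shows "pow_cong_pairs k d M \<subseteq> insert (0, 0)
    (\<Union>g\<in>{1..M}. (\<lambda>(a, b). (int g * a, int g * b)) ` coprime_pow_cong_pairs k (d div gcd d (g ^ k)) (M div g))"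
    (is "_ \<subseteq> insert _ (\<Union>g\<in>_. ?mult g ` ?T g)")
proof
  fix z assume "z \<in> pow_cong_pairs k d M"
  then obtain u v where z: "z = (u, v)" and "\<bar>u\<bar> \<le> int M" "\<bar>v\<bar> \<le> int M"
    and uv_cong: "[u ^ k = v ^ k] (mod int d)"
    unfolding pow_cong_pairs_def by blast
  show "z \<in> insert (0, 0) (\<Union>g\<in>{1..M}. ?mult g ` ?T g)"
  proof (cases "u = 0 \<and> v = 0")
    case False
    define g where "g = nat (gcd u v)"
    have "gcd u v > 0" using False by simp
    then have g_eq: "int g = gcd u v" and "g > 0"
      unfolding g_def by simp_all
    have "int g \<le> \<bar>u\<bar>" if "u \<noteq> 0"
      unfolding g_eq using dvd_imp_le_int[OF that gcd_dvd1[of u v]] by simp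
    moreover have "int g \<le> \<bar>v\<bar>" if "v \<noteq> 0"
      unfolding g_eq using dvd_imp_le_int[OF that gcd_dvd2[of u v]] by simp
    ultimately have "int g \<le> \<bar>u\<bar> \<or> int g \<le> \<bar>v\<bar>"
      using False by blast
    then have "g \<in> {1..M}"
      using \<open>g > 0\<close> \<open>\<bar>u\<bar> \<le> int M\<close> \<open>\<bar>v\<bar> \<le> int M\<close> by auto
    define a where "a = u div int g"
    define b where "b = v div int g"
    have u_eq: "u = int g * a" and v_eq: "v = int g * b"
      unfolding a_def b_def g_eq by simp_all
    have "coprime a b"
      unfolding a_def b_def g_eq using False by (intro div_gcd_coprime) auto
    moreover have "\<bar>a\<bar> \<le> int (M div g)" "\<bar>b\<bar> \<le> int (M div g)"
      using abs_le_div_if_abs_mult_le \<open>g > 0\<close> u_eq v_eq \<open>\<bar>u\<bar> \<le> int M\<close> \<open>\<bar>v\<bar> \<le> int M\<close> by auto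
    moreover have "[a ^ k = b ^ k] (mod int (d div gcd d (g ^ k)))"
      using uv_cong assms unfolding u_eq v_eq by (rule pow_cong_div_gcd_if_pow_cong_mult)
    ultimately have "(a, b) \<in> ?T g"
      unfolding coprime_pow_cong_pairs_def pow_cong_pairs_def by simp
    moreover have "z = ?mult g (a, b)"
      unfolding z u_eq v_eq by simp
    ultimately show ?thesis
      using \<open>g \<in> {1..M}\<close> by (intro insertI2 UN_I image_eqI)
  qed (use z in simp)
qed

lemma card_pow_cong_pairs_le_sum_coprime:
  fixes k d M :: nat
  assumes "d > 0"
  shows "card (pow_cong_pairs k d M)
    \<le> 1 + (\<Sum>g=1..M. card (coprime_pow_cong_pairs k (d div gcd d (g ^ k)) (M div g)))"
proof -
  let ?mult = "\<lambda>g::nat. \<lambda>(a::int, b::int). (int g * a, int g * b)"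
  let ?T = "\<lambda>g. coprime_pow_cong_pairs k (d div gcd d (g ^ k)) (M div g)"
  have "card (pow_cong_pairs k d M) \<le> card (insert (0, 0) (\<Union>g\<in>{1..M}. ?mult g ` ?T g))"
    using pow_cong_pairs_subset_gcd_multiples[OF assms] by (intro card_mono) auto
  also have "\<dots> \<le> 1 + card (\<Union>g\<in>{1..M}. ?mult g ` ?T g)"
    by (simp add: card_insert_if)
  also have "card (\<Union>g\<in>{1..M}. ?mult g ` ?T g) \<le> (\<Sum>g=1..M. card (?mult g ` ?T g))"
    by (rule card_UN_le) simp
  also have "\<dots> \<le> (\<Sum>g=1..M. card (?T g))"
    by (intro sum_mono card_image_le) simp
  finally show ?thesis by simp
qed

lemma eq_pow_if_pow_cong_large_modulus:
  fixes u v :: int and k d M :: nat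
  assumes "\<bar>u\<bar> \<le> int M" "\<bar>v\<bar> \<le> int M" "[u ^ k = v ^ k] (mod int d)"
    and "d = 0 \<or> 2 * M ^ k < d"
  shows "u ^ k = v ^ k"
proof (rule ccontr)
  assume "u ^ k \<noteq> v ^ k"
  moreover have "int d dvd u ^ k - v ^ k"
    using assms(3) by (simp add: cong_iff_dvd_diff)
  ultimately have "d \<noteq> 0"
    by (cases "d = 0") simp_all
  have "\<bar>int d\<bar> \<le> \<bar>u ^ k - v ^ k\<bar>"
    using \<open>u ^ k \<noteq> v ^ k\<close> \<open>int d dvd u ^ k - v ^ k\<close> by (intro dvd_imp_le_int) auto
  also have "\<dots> \<le> \<bar>u\<bar> ^ k + \<bar>v\<bar> ^ k"
    by (simp add: power_abs[symmetric] abs_triangle_ineq4)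
  also have "\<dots> \<le> int M ^ k + int M ^ k"
    using assms(1,2) by (intro add_mono power_mono) auto
  finally have "d \<le> 2 * M ^ k"
    by (simp only: mult_2 flip: of_nat_power of_nat_add of_nat_le_iff)
  then show False
    using assms(4) \<open>d \<noteq> 0\<close> by simp
qed

lemma card_pow_cong_pairs_large_modulus:
  fixes k d M :: nat
  assumes "k > 0" "d = 0 \<or> 2 * M ^ k < d"
  shows "card (pow_cong_pairs k d M) \<le> 2 * (2 * M + 1)"
proof -
  let ?I = "{- int M..int M}"
  have "pow_cong_pairs k d M \<subseteq> (\<lambda>u. (u, u)) ` ?I \<union> (\<lambda>u. (u, - u)) ` ?I"
  proof
    fix z assume "z \<in> pow_cong_pairs k d M"
    then obtain u v where z: "z = (u, v)" and uv: "\<bar>u\<bar> \<le> int M" "\<bar>v\<bar> \<le> int M"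
      and "[u ^ k = v ^ k] (mod int d)"
      unfolding pow_cong_pairs_def by blast
    then have "u ^ k = v ^ k"
      using eq_pow_if_pow_cong_large_modulus assms(2) by blast
    then have "\<bar>u\<bar> ^ k = \<bar>v\<bar> ^ k"
      by (metis power_abs)
    then have "\<bar>u\<bar> = \<bar>v\<bar>"
      using assms(1) by (simp add: power_eq_iff_eq_base)
    then have "v = u \<or> v = - u"
      by arith
    moreover have "u \<in> ?I"
      using uv by auto
    ultimately show "z \<in> (\<lambda>u. (u, u)) ` ?I \<union> (\<lambda>u. (u, - u)) ` ?I"
      unfolding z by blast
  qed
  then have "card (pow_cong_pairs k d M) \<le> card ((\<lambda>u. (u, u)) ` ?I \<union> (\<lambda>u. (u, - u)) ` ?I)"
    by (intro card_mono) auto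
  also have "\<dots> \<le> card ((\<lambda>u. (u, u)) ` ?I) + card ((\<lambda>u. (u, - u)) ` ?I)"
    by (rule card_Un_le)
  also have "\<dots> \<le> card ?I + card ?I"
    by (intro add_mono card_image_le) auto
  finally show ?thesis by simp
qed

lemma card_pow_cong_pairs_le:
  fixes k d M :: nat and W :: real
  assumes "d > 0" "k \<ge> 2" "M \<ge> 1"
    and roots: "\<And>e c. e dvd d \<Longrightarrow> coprime c (int e) \<Longrightarrow> real (card (kth_roots_mod k c e)) \<le> W"
  shows "real (card (pow_cong_pairs k d M))
    \<le> 1 + W * (12 * real M ^ 2 * real (card {f. f dvd d}) * real d powr (- 2 / real k)
                + 6 * real M * (1 + ln (real M)))"
proof -
  define G where "G g = gcd d (g ^ k)" for g :: nat
  define E where "E g = d div G g" for g :: nat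
  have "real (card (kth_roots_mod k 1 1)) \<le> W"
    by (rule roots) simp_all
  then have "W \<ge> 0"
    using of_nat_0_le_iff order_trans by blast
  have "G g > 0" "G g dvd d" for g
    unfolding G_def using assms(1) by simp_all
  then have d_eq: "d = G g * E g" for g
    unfolding E_def by simp
  then have "E g > 0" "E g dvd d" for g
    using assms(1) by (metis gr0I mult_0_right, metis dvd_triv_right)
  have "real (E g) = real d / real (G g)" for g
    using d_eq[of g] \<open>G g > 0\<close> by (simp add: field_simps flip: of_nat_mult)
  have card_T: "real (card (coprime_pow_cong_pairs k (E g) (M div g)))
      \<le> W * (6 * real M ^ 2 / real d * (real (G g) / real g ^ 2) + 6 * real M * (1 / real g))"
    if "g \<in> {1..M}" for g
  proof -
    have "real (card (coprime_pow_cong_pairs k (E g) (M div g)))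
        \<le> W * (6 * real M ^ 2 / (real g ^ 2 * real (E g)) + 6 * real M / real g)"
      using that \<open>E g > 0\<close> assms(2) roots[OF dvd_trans[OF _ \<open>E g dvd d\<close>]]
      by (intro card_coprime_pow_cong_pairs_div_le) auto
    also have "\<dots> = W * (6 * real M ^ 2 / real d * (real (G g) / real g ^ 2) + 6 * real M * (1 / real g))"
      using \<open>real (E g) = real d / real (G g)\<close> \<open>G g > 0\<close> assms(1) by simp
    finally show ?thesis .
  qed
  have "real (card (pow_cong_pairs k d M))
      \<le> real (1 + (\<Sum>g=1..M. card (coprime_pow_cong_pairs k (E g) (M div g))))"
    using card_pow_cong_pairs_le_sum_coprime[OF assms(1), of k M] unfolding E_def G_def
    by (simp only: of_nat_le_iff)
  also have "\<dots> = 1 + (\<Sum>g=1..M. real (card (coprime_pow_cong_pairs k (E g) (M div g))))"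
    by simp
  also have "\<dots> \<le> 1 + (\<Sum>g=1..M. W * (6 * real M ^ 2 / real d * (real (G g) / real g ^ 2) + 6 * real M * (1 / real g)))"
    by (intro add_left_mono sum_mono card_T)
  also have "\<dots> = 1 + W * (6 * real M ^ 2 / real d * (\<Sum>g=1..M. real (G g) / real g ^ 2)
                          + 6 * real M * (\<Sum>g=1..M. 1 / real g))"
    by (simp only: sum.distrib flip: sum_distrib_left)
  also have "\<dots> \<le> 1 + W * (6 * real M ^ 2 / real d * (2 * real (card {f. f dvd d}) * real d powr (1 - 2 / real k))
                          + 6 * real M * (1 + ln (real M)))"
    using sum_gcd_pow_inverse_squares_le[OF assms(1-3)] sum_inverse_le_ln[OF assms(3)] \<open>W \<ge> 0\<close>
    unfolding G_def by (intro add_left_mono mult_left_mono add_mono) auto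
  also have "real d powr (1 - 2 / real k) = real d powr 1 * real d powr (- 2 / real k)"
    by (simp only: powr_add[symmetric]) simp
  also have "real d powr 1 = real d"
    by simp
  finally show ?thesis
    using assms(1) by (simp add: field_simps)
qed

lemma one_plus_ln_le_powr:
  fixes B \<epsilon> :: real
  assumes "B \<ge> 1" "\<epsilon> > 0"
  shows "1 + ln B \<le> (1 + 2 / \<epsilon>) * B powr (\<epsilon> / 2)"
proof -
  have "ln (B powr (\<epsilon> / 2)) \<le> B powr (\<epsilon> / 2) - 1"
    using assms(1) by (intro ln_le_minus_one) simp
  then have "\<epsilon> / 2 * ln B \<le> B powr (\<epsilon> / 2)"
    using assms(1) by (simp add: ln_powr)
  then have "ln B \<le> 2 / \<epsilon> * B powr (\<epsilon> / 2)"
    using assms(2) by (simp add: field_simps)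
  moreover have "1 \<le> B powr (\<epsilon> / 2)"
    using assms by (intro ge_one_powr_ge_zero) auto
  ultimately show ?thesis
    by (simp add: algebra_simps)
qed

lemma quadratic_term_le_powr:
  fixes B M x C T \<delta> \<epsilon> \<kappa> :: real
  assumes "B \<ge> 1" "0 \<le> M" "M \<le> B" "x \<ge> 1" "2 * \<delta> \<le> \<epsilon>" "\<epsilon> > 0"
    and "C \<ge> 0" "T \<le> C * x powr \<delta>"
  shows "C * x powr \<delta> * (12 * M ^ 2 * T * x powr (- \<kappa>)) \<le> 12 * C ^ 2 * B powr (2 + \<epsilon>) * x powr (\<epsilon> - \<kappa>)"
proof -
  have "M ^ 2 \<le> B ^ 2"
    using assms(2,3) by (intro power_mono) auto
  also have "B ^ 2 = B powr 2"
    using assms(1) by (simp add: powr_realpow)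
  also have "\<dots> \<le> B powr (2 + \<epsilon>)"
    using assms(1,6) by (intro powr_mono) auto
  finally have "M ^ 2 \<le> B powr (2 + \<epsilon>)" .
  have "x powr \<delta> * x powr \<delta> * x powr (- \<kappa>) = x powr (2 * \<delta> - \<kappa>)"
    by (simp add: powr_add[symmetric])
  also have "\<dots> \<le> x powr (\<epsilon> - \<kappa>)"
    using assms(4,5) by (intro powr_mono) auto
  finally have x_le: "x powr \<delta> * x powr \<delta> * x powr (- \<kappa>) \<le> x powr (\<epsilon> - \<kappa>)" .
  have "C * x powr \<delta> * (12 * M ^ 2 * T * x powr (- \<kappa>))
      \<le> C * x powr \<delta> * (12 * M ^ 2 * (C * x powr \<delta>) * x powr (- \<kappa>))"
    using assms(8) assms(7) by (intro mult_left_mono mult_right_mono) auto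
  also have "\<dots> = 12 * C ^ 2 * M ^ 2 * (x powr \<delta> * x powr \<delta> * x powr (- \<kappa>))"
    by (simp add: power2_eq_square)
  also have "\<dots> \<le> 12 * C ^ 2 * B powr (2 + \<epsilon>) * x powr (\<epsilon> - \<kappa>)"
    using \<open>M ^ 2 \<le> B powr (2 + \<epsilon>)\<close> x_le by (intro mult_mono mult_left_mono) auto
  finally show ?thesis .
qed

lemma linear_term_le_powr:
  fixes B M x C \<delta> \<epsilon> :: real and k :: nat
  assumes "B \<ge> 1" "1 \<le> M" "M \<le> B" "0 < x" "x \<le> 2 * M ^ k" "C \<ge> 0"
    and "real k * \<delta> = \<epsilon> / 2" "\<delta> > 0" "\<epsilon> > 0"
  shows "C * x powr \<delta> * (6 * M * (1 + ln M)) \<le> 6 * C * 2 powr \<delta> * (1 + 2 / \<epsilon>) * B powr (1 + \<epsilon>)"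
proof -
  have "M ^ k \<le> B ^ k"
    using assms(2,3) by (intro power_mono) auto
  then have "x powr \<delta> \<le> (2 * B ^ k) powr \<delta>"
    using assms(4,5,8) by (intro powr_mono2) auto
  also have "\<dots> = 2 powr \<delta> * B powr (real k * \<delta>)"
    using assms(1) by (simp add: powr_mult powr_realpow[symmetric] powr_powr)
  also have "\<dots> = 2 powr \<delta> * B powr (\<epsilon> / 2)"
    by (simp only: assms(7))
  finally have x_le: "x powr \<delta> \<le> 2 powr \<delta> * B powr (\<epsilon> / 2)" .
  have "1 + ln M \<le> (1 + 2 / \<epsilon>) * B powr (\<epsilon> / 2)"
  proof -
    have "ln M \<le> ln B"
      using assms(2,3) by (subst ln_le_cancel_iff) auto
    then show ?thesis
      using one_plus_ln_le_powr[OF assms(1,9)] by simp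
  qed
  then have "C * x powr \<delta> * (6 * M * (1 + ln M))
      \<le> C * (2 powr \<delta> * B powr (\<epsilon> / 2)) * (6 * B * ((1 + 2 / \<epsilon>) * B powr (\<epsilon> / 2)))"
    using x_le assms(2,3,6) by (intro mult_mono mult_left_mono) auto
  also have "\<dots> = 6 * C * 2 powr \<delta> * (1 + 2 / \<epsilon>) * (B powr (\<epsilon> / 2) * B powr 1 * B powr (\<epsilon> / 2))"
    using assms(1) by simp
  also have "B powr (\<epsilon> / 2) * B powr 1 * B powr (\<epsilon> / 2) = B powr (\<epsilon> / 2 + 1 + \<epsilon> / 2)"
    by (simp only: powr_add)
  also have "\<epsilon> / 2 + 1 + \<epsilon> / 2 = 1 + \<epsilon>"
    by simp
  finally show ?thesis .
qed

lemma card_kth_roots_mod_le_powr: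
  fixes k d e :: nat and c :: int and C \<delta> :: real
  assumes "k > 0" "\<delta> \<ge> 0" "C \<ge> 0" "d > 0" "e dvd d" "coprime c (int e)"
    and roots: "\<And>n. n > 0 \<Longrightarrow> real (k ^ 3) ^ card (prime_factors n) \<le> C * real n powr \<delta>"
  shows "real (card (kth_roots_mod k c e)) \<le> C * real d powr \<delta>"
proof -
  have "e > 0" "e \<le> d"
    using assms(4,5) by (auto intro: Nat.gr0I dvd_imp_le)
  have "real (card (kth_roots_mod k c e)) \<le> real ((k ^ 3) ^ card (prime_factors e))"
    using card_kth_roots_mod_le[OF \<open>e > 0\<close> assms(1,6)] by (simp only: of_nat_le_iff)
  also have "\<dots> \<le> C * real e powr \<delta>"
    using roots[OF \<open>e > 0\<close>] by simp
  also have "\<dots> \<le> C * real d powr \<delta>"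
    using \<open>e > 0\<close> \<open>e \<le> d\<close> assms(2,3) by (intro mult_left_mono powr_mono2) auto
  finally show ?thesis .
qed

lemma card_pow_cong_pairs_small_modulus_le_powr:
  fixes k d M :: nat and B \<epsilon> C :: real
  defines "\<delta> \<equiv> \<epsilon> / (2 * real k)"
  assumes "k \<ge> 2" "\<epsilon> > 0" "C > 0" "1 \<le> M" "real M \<le> B" "d > 0" "d \<le> 2 * M ^ k"
    and divisors: "\<And>n. n > 0 \<Longrightarrow> real (card {f. f dvd n}) \<le> C * real n powr \<delta>"
    and roots: "\<And>n. n > 0 \<Longrightarrow> real (k ^ 3) ^ card (prime_factors n) \<le> C * real n powr \<delta>"
  shows "real (card (pow_cong_pairs k d M))
    \<le> 1 + 12 * C ^ 2 * (B powr (2 + \<epsilon>) * real d powr (\<epsilon> - 2 / real k))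
        + 6 * C * 2 powr \<delta> * (1 + 2 / \<epsilon>) * B powr (1 + \<epsilon>)"
proof -
  define W where "W = C * real d powr \<delta>"
  have "B \<ge> 1" using assms(5,6) by simp
  have "\<delta> > 0" "real k * \<delta> = \<epsilon> / 2" "2 * \<delta> \<le> \<epsilon>"
    unfolding \<delta>_def using assms(2,3) by (auto simp: field_simps)
  have "real d \<le> real (2 * M ^ k)"
    using assms(8) by (simp only: of_nat_le_iff)
  then have d_le: "real d \<le> 2 * real M ^ k"
    by simp
  have roots_W: "real (card (kth_roots_mod k c e)) \<le> W" if "e dvd d" "coprime c (int e)" for e c
    unfolding W_def using card_kth_roots_mod_le_powr[OF _ _ _ assms(7) that roots] \<open>\<delta> > 0\<close> assms(2,4)
    by simp
  have "real (card (pow_cong_pairs k d M))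
      \<le> 1 + W * (12 * real M ^ 2 * real (card {f. f dvd d}) * real d powr (- 2 / real k))
          + W * (6 * real M * (1 + ln (real M)))"
    using card_pow_cong_pairs_le[OF assms(7,2,5) roots_W] by (simp add: algebra_simps)
  also have "W * (12 * real M ^ 2 * real (card {f. f dvd d}) * real d powr (- 2 / real k))
      \<le> 12 * C ^ 2 * (B powr (2 + \<epsilon>) * real d powr (\<epsilon> - 2 / real k))"
    unfolding W_def
    using quadratic_term_le_powr[OF \<open>B \<ge> 1\<close> _ assms(6) _ \<open>2 * \<delta> \<le> \<epsilon>\<close> assms(3) less_imp_le[OF assms(4)]]
      divisors[OF assms(7)] assms(7) by (simp add: mult.assoc)
  also have "W * (6 * real M * (1 + ln (real M))) \<le> 6 * C * 2 powr \<delta> * (1 + 2 / \<epsilon>) * B powr (1 + \<epsilon>)"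
    unfolding W_def
    using linear_term_le_powr[where C = C, OF \<open>B \<ge> 1\<close> _ assms(6) _ d_le _ \<open>real k * \<delta> = \<epsilon> / 2\<close> \<open>\<delta> > 0\<close> assms(3)]
      assms(4,5,7) by simp
  finally show ?thesis by simp
qed

lemma card_pow_cong_pairs_le_powr:
  fixes k d M :: nat and B \<epsilon> C :: real
  defines "\<delta> \<equiv> \<epsilon> / (2 * real k)"
  assumes "k \<ge> 2" "\<epsilon> > 0" "C > 0" "1 \<le> M" "real M \<le> B"
    and divisors: "\<And>n. n > 0 \<Longrightarrow> real (card {f. f dvd n}) \<le> C * real n powr \<delta>"
    and roots: "\<And>n. n > 0 \<Longrightarrow> real (k ^ 3) ^ card (prime_factors n) \<le> C * real n powr \<delta>"
  shows "real (card (pow_cong_pairs k d M))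
    \<le> (7 + 12 * C ^ 2 + 6 * C * 2 powr \<delta> * (1 + 2 / \<epsilon>))
       * (B powr (1 + \<epsilon>) + B powr (2 + \<epsilon>) * real d powr (\<epsilon> - 2 / real k))"
proof -
  define K where "K = 6 * C * 2 powr \<delta> * (1 + 2 / \<epsilon>)"
  define R1 where "R1 = B powr (1 + \<epsilon>)"
  define R2 where "R2 = B powr (2 + \<epsilon>) * real d powr (\<epsilon> - 2 / real k)"
  have "K \<ge> 0" "R2 \<ge> 0"
    unfolding K_def R2_def using assms(3,4) by simp_all
  have "real M \<le> R1"
    unfolding R1_def using assms(5,6) assms(3) powr_mono[of 1 "1 + \<epsilon>" B] by simp
  have "real (card (pow_cong_pairs k d M)) \<le> 1 + 6 * R1 + 12 * C ^ 2 * R2 + K * R1"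
  proof (cases "d = 0 \<or> 2 * M ^ k < d")
    case True
    then have "card (pow_cong_pairs k d M) \<le> 2 * (2 * M + 1)"
      using card_pow_cong_pairs_large_modulus assms(2) by simp
    then have "real (card (pow_cong_pairs k d M)) \<le> real (2 * (2 * M + 1))"
      by (simp only: of_nat_le_iff)
    moreover have "0 \<le> 12 * C ^ 2 * R2 + K * R1"
      using \<open>K \<ge> 0\<close> \<open>R2 \<ge> 0\<close> \<open>real M \<le> R1\<close> assms(5) by simp
    ultimately show ?thesis
      using \<open>real M \<le> R1\<close> assms(5) by simp
  next
    case False
    then have "d > 0" "d \<le> 2 * M ^ k"
      by auto
    then have "real (card (pow_cong_pairs k d M)) \<le> 1 + 12 * C ^ 2 * R2 + K * R1"
      using card_pow_cong_pairs_small_modulus_le_powr[OF assms(2-6) _ _ divisors[unfolded \<delta>_def] roots[unfolded \<delta>_def]]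
      unfolding K_def R1_def R2_def \<delta>_def by simp
    then show ?thesis
      using \<open>real M \<le> R1\<close> assms(5) by simp
  qed
  also have "\<dots> \<le> (7 + 12 * C ^ 2 + K) * (R1 + R2)"
  proof -
    have "0 \<le> 7 * R2 + 12 * C ^ 2 * R1 + K * R2"
      using \<open>K \<ge> 0\<close> \<open>R2 \<ge> 0\<close> \<open>real M \<le> R1\<close> by (intro add_nonneg_nonneg mult_nonneg_nonneg) auto
    moreover have "(7 + 12 * C ^ 2 + K) * (R1 + R2)
        = 7 * R1 + 7 * R2 + 12 * C ^ 2 * R1 + 12 * C ^ 2 * R2 + K * R1 + K * R2"
      by (simp add: algebra_simps)
    ultimately show ?thesis
      using \<open>real M \<le> R1\<close> assms(5) by linarith
  qed
  finally show ?thesis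
    unfolding K_def R1_def R2_def .
qed

lemma pow_cong_pairs_nat_floor:
  fixes B :: real and k d :: nat
  assumes "B \<ge> 0"
  shows "{(u::int, v::int). \<bar>real_of_int u\<bar> \<le> B \<and> \<bar>real_of_int v\<bar> \<le> B \<and> [u ^ k = v ^ k] (mod int d)}
    = pow_cong_pairs k d (nat \<lfloor>B\<rfloor>)"
proof -
  have "\<bar>real_of_int u\<bar> \<le> B \<longleftrightarrow> \<bar>u\<bar> \<le> int (nat \<lfloor>B\<rfloor>)" for u :: int
    using assms by (simp add: le_floor_iff flip: of_int_abs)
  then show ?thesis
    unfolding pow_cong_pairs_def by auto
qed

theorem lemma2p4:
  fixes k :: nat and \<epsilon> :: real
  assumes "k \<ge> 3" and "\<epsilon> > 0"
  shows "\<exists>C>0. \<forall>(B::real) (d::nat). B \<ge> 1 \<longrightarrow>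
    real (card {(u::int, v::int). \<bar>real_of_int u\<bar> \<le> B \<and> \<bar>real_of_int v\<bar> \<le> B \<and> [u ^ k = v ^ k] (mod int d)})
      \<le> C * (B powr (1 + \<epsilon>) + B powr (2 + \<epsilon>) * real d powr (\<epsilon> - 2 / real k))"
proof -
  define \<delta> where "\<delta> = \<epsilon> / (2 * real k)"
  have "\<delta> > 0"
    unfolding \<delta>_def using assms by simp
  obtain C where "C > 0"
    and divisors: "\<And>n. n > 0 \<Longrightarrow> real (card {f. f dvd n}) \<le> C * real n powr \<delta>"
    and roots: "\<And>n. n > 0 \<Longrightarrow> real (k ^ 3) ^ card (prime_factors n) \<le> C * real n powr \<delta>"
    using card_divisors_and_pow_card_prime_factors_le_powr[OF \<open>\<delta> > 0\<close>, of "real (k ^ 3)"] assms(1) by auto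
  define K where "K = 7 + 12 * C ^ 2 + 6 * C * 2 powr \<delta> * (1 + 2 / \<epsilon>)"
  have "K > 0"
    unfolding K_def using \<open>C > 0\<close> assms(2) by (simp add: add_pos_nonneg)
  moreover have "real (card {(u::int, v::int). \<bar>real_of_int u\<bar> \<le> B \<and> \<bar>real_of_int v\<bar> \<le> B \<and> [u ^ k = v ^ k] (mod int d)})
      \<le> K * (B powr (1 + \<epsilon>) + B powr (2 + \<epsilon>) * real d powr (\<epsilon> - 2 / real k))"
    if "B \<ge> 1" for B :: real and d :: nat
  proof -
    have "1 \<le> nat \<lfloor>B\<rfloor>" "real (nat \<lfloor>B\<rfloor>) \<le> B"
      using that by (simp_all add: le_nat_iff)
    then show ?thesis
      unfolding pow_cong_pairs_nat_floor[of B, OF order_trans[OF zero_le_one that]] K_def \<delta>_def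
      using that assms \<open>C > 0\<close>
      by (intro card_pow_cong_pairs_le_powr divisors[unfolded \<delta>_def] roots[unfolded \<delta>_def]) auto
  qed
  ultimately show ?thesis
    by blast
qed

end
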